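(* Assume the setup in the context. Let $t\in T_{j_1}$, $s\in T_{j_2}$, $\bar z\in\mathcal{Z}$. If $\frac{d}{dz}Q(t,\bar z)\neq\frac{d}{dz}Q(s,\bar z)$, then there exist neighborhoods $N$ of $t$ (in $T_{j_1}$), $M$ of $s$ (in $T_{j_2}$), and $W$ of $\bar z$ such that $P\big(\{z\in W: V(N,z)=V(M,z)\}\big)=0$.
   Context: $z$ is an absolutely continuous random vector in $\mathbb{R}^{d_z}$ with distribution $P$, and $\mathcal{Z}\subset\mathbb{R}^{d_z}$ is measurable with $P(z\in\mathcal{Z})=1$. $T=\bigcup_{j\in J}T_j$ is a disjoint union of finitely or countably many second-countable Hausdorff manifolds, possibly with boundary or corner. $Q:T\times\mathcal{Z}\to\mathbb{R}$ is continuous on each $T_j\times\mathcal{Z}$, and for every $(t,z)\in T_j\times\mathcal{Z}$, $Q(t,z)$ is differentiable in $z$ with derivative $\frac{d}{dz}Q(t,z)$ continuous in $(t,z)$. For $K\subset T$, $V(K,z)=\inf_{t\in K}Q(t,z)$. *)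

theory Defs
  imports "HOL-Analysis.Analysis" "HOL-Probability.Probability"
begin

text \<open>Local model of an n-dimensional manifold with corners:
  [0,inf)^k x R^(n-k), realised inside Euclidean_space n (functions nat => real
  vanishing from index n on).\<close>
definition corner_model :: "nat \<Rightarrow> nat \<Rightarrow> (nat \<Rightarrow> real) topology" where
  "corner_model n k = subtopology (Euclidean_space n) {x. \<forall>i<k. 0 \<le> x i}"

definition manifold_with_corners :: "'a topology \<Rightarrow> bool" where
  "manifold_with_corners X \<longleftrightarrow>
     Hausdorff_space X \<and> second_countable X \<and>
     (\<exists>n. \<forall>x\<in>topspace X. \<exists>U. openin X U \<and> x \<in> U \<and>
        (\<exists>k\<le>n. \<exists>W. openin (corner_model n k) W \<and>
            subtopology X U homeomorphic_space subtopology (corner_model n k) W))"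

definition Vinf :: "('t \<Rightarrow> 'z \<Rightarrow> real) \<Rightarrow> 't set \<Rightarrow> 'z \<Rightarrow> ereal" where
  "Vinf Q K z = (INF t\<in>K. ereal (Q t z))"

end

theory Submission
  imports Defs
begin

text \<open>Let \<open>a = DQ t zbar\<close>, \<open>b = DQ s zbar\<close> and \<open>r = |a - b| / 8\<close>. Choose compact
  neighbourhoods \<open>N\<close> of \<open>t\<close>, \<open>M\<close> of \<open>s\<close> and a ball \<open>W\<close> around \<open>zbar\<close> on which the gradients of
  \<open>Q\<close> stay within \<open>r\<close> of \<open>a\<close> resp. \<open>b\<close>. If \<open>x\<close> and \<open>y\<close> are tie points (the minima of \<open>Q\<close> over
  \<open>N\<close> and over \<open>M\<close> agree) and are close enough for the first order expansions of the four
  minimizers to be accurate, comparing the minimizers gives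
  \<open>|(a - b) \<bullet> (x - y)| \<le> |a - b| / 2 * |x - y|\<close>. Hence the tie set is a countable union of
  bounded sets satisfying this cone condition, and each of them is Lebesgue null because its
  translates along \<open>a - b\<close> are pairwise disjoint. Absolute continuity transfers this to \<open>P\<close>.\<close>

lemma locally_compact_space_corner_model: "locally_compact_space (corner_model n k)"
proof -
  have "closed {x::nat\<Rightarrow>real. \<forall>i<k. 0 \<le> x i}"
  proof -
    have "{x::nat\<Rightarrow>real. \<forall>i<k. 0 \<le> x i} = (\<Inter>i\<in>{..<k}. (\<lambda>x. x i) -` {0..})" by auto
    moreover have "closed ((\<lambda>x::nat\<Rightarrow>real. x i) -` {0..})" for i
      by (intro closed_vimage) (auto intro: continuous_on_product_coordinates)
    ultimately show ?thesis by auto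
  qed
  moreover have "closed (topspace (Euclidean_space n))"
    using closedin_Euclidean_space_iff by blast
  ultimately have "closedin (Euclidean_space n) (topspace (Euclidean_space n) \<inter> {x. \<forall>i<k. 0 \<le> x i})"
    by (simp add: closedin_Euclidean_space_iff closed_Int)
  then have "locally_compact_space (subtopology (Euclidean_space n)
               (topspace (Euclidean_space n) \<inter> {x. \<forall>i<k. 0 \<le> x i}))"
    by (rule locally_compact_space_closed_subset[OF locally_compact_Euclidean_space])
  then show ?thesis unfolding corner_model_def subtopology_restrict .
qed

lemma manifold_with_corners_imp_locally_compact_space:
  assumes "manifold_with_corners X"
  shows "locally_compact_space X"
  unfolding locally_compact_space_def
proof
  fix x assume x: "x \<in> topspace X"
  obtain n where "\<forall>x\<in>topspace X. \<exists>U. openin X U \<and> x \<in> U \<and>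
        (\<exists>k\<le>n. \<exists>W. openin (corner_model n k) W \<and>
            subtopology X U homeomorphic_space subtopology (corner_model n k) W)"
    using assms unfolding manifold_with_corners_def by blast
  then obtain U k W where U: "openin X U" "x \<in> U" and W: "openin (corner_model n k) W"
    and hm: "subtopology X U homeomorphic_space subtopology (corner_model n k) W"
    using x by blast
  have "Hausdorff_space (corner_model n k)"
    unfolding corner_model_def
    by (rule Hausdorff_space_subtopology[OF metrizable_imp_Hausdorff_space[OF metrizable_Euclidean_space]])
  then have "locally_compact_space (subtopology (corner_model n k) W)"
    by (intro locally_compact_space_open_subset[OF _ locally_compact_space_corner_model W]) simp
  then have "locally_compact_space (subtopology X U)"
    using homeomorphic_locally_compact_space[OF hm] by simp
  moreover have "x \<in> topspace (subtopology X U)" using x U by auto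
  ultimately obtain V K where VK: "openin (subtopology X U) V" "compactin (subtopology X U) K"
      "x \<in> V" "V \<subseteq> K"
    unfolding locally_compact_space_def by blast
  show "\<exists>V K. openin X V \<and> compactin X K \<and> x \<in> V \<and> V \<subseteq> K"
  proof (intro exI conjI)
    show "openin X V" using VK(1) U(1) by (rule openin_trans_full)
    show "compactin X K" using VK(2) by (simp add: compactin_subtopology)
  qed (use VK in auto)
qed

lemma manifold_with_corners_compact_neighbourhood:
  fixes T :: "'a::topological_space set"
  assumes "manifold_with_corners (top_of_set T)" and "open A" and "x \<in> T" and "x \<in> A"
  obtains U K where "openin (top_of_set T) U" "compact K" "x \<in> U" "U \<subseteq> K" "K \<subseteq> T \<inter> A"
proof -
  have "locally_compact_space (top_of_set T)" "Hausdorff_space (top_of_set T)"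
    using assms(1) manifold_with_corners_imp_locally_compact_space
    unfolding manifold_with_corners_def by blast+
  then have "neighbourhood_base_of (compactin (top_of_set T)) (top_of_set T)"
    using locally_compact_space_neighbourhood_base by blast
  moreover have "openin (top_of_set T) (T \<inter> A)" using assms(2) by (simp add: openin_open_Int)
  ultimately obtain U K where "openin (top_of_set T) U" "compactin (top_of_set T) K"
      "x \<in> U" "U \<subseteq> K" "K \<subseteq> T \<inter> A"
    using assms(3,4) unfolding neighbourhood_base_of by (meson IntI)
  then show ?thesis using that by (auto simp: compactin_subtopology)
qed

lemma continuous_on_Times_near:
  fixes g :: "'a::topological_space \<Rightarrow> 'z::metric_space \<Rightarrow> 'v::metric_space"
  assumes "continuous_on (T \<times> Z) (\<lambda>(t, z). g t z)" and "t0 \<in> T" and "z0 \<in> Z" and "r > 0"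
  obtains A \<rho> where "open A" "t0 \<in> A" "\<rho> > 0"
    "\<And>t z. t \<in> T \<inter> A \<Longrightarrow> z \<in> Z \<inter> ball z0 \<rho> \<Longrightarrow> dist (g t z) (g t0 z0) < r"
proof -
  have t0z0: "(t0, z0) \<in> T \<times> Z" and centre: "g t0 z0 \<in> ball (g t0 z0) r"
    using assms(2-4) by auto
  have "\<exists>G. open G \<and> (t0, z0) \<in> G \<and>
      (\<forall>p\<in>T \<times> Z. p \<in> G \<longrightarrow> (\<lambda>(t, z). g t z) p \<in> ball (g t0 z0) r)"
    using continuous_on_topological[THEN iffD1, rule_format, OF assms(1) t0z0 open_ball] centre
    by simp
  then obtain G where G: "open G" "(t0, z0) \<in> G"
      "\<forall>p\<in>T \<times> Z. p \<in> G \<longrightarrow> (\<lambda>(t, z). g t z) p \<in> ball (g t0 z0) r"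
    by (elim exE conjE)
  obtain A B where "open A" "open B" "(t0, z0) \<in> A \<times> B" "A \<times> B \<subseteq> G"
    by (rule open_prod_elim[OF G(1,2)])
  then have AB: "open A" "open B" "t0 \<in> A" "z0 \<in> B" "A \<times> B \<subseteq> G"
    by auto
  obtain \<rho> where "\<rho> > 0" "ball z0 \<rho> \<subseteq> B"
    using AB(2,4) open_contains_ball by blast
  show ?thesis
  proof (rule that[OF AB(1,3) \<open>\<rho> > 0\<close>])
    fix t z assume "t \<in> T \<inter> A" "z \<in> Z \<inter> ball z0 \<rho>"
    with \<open>ball z0 \<rho> \<subseteq> B\<close> AB(5) have "(t, z) \<in> G" "(t, z) \<in> T \<times> Z"
      by auto
    with G(3) have "g t z \<in> ball (g t0 z0) r" by fastforce
    then show "dist (g t z) (g t0 z0) < r" by (simp add: dist_commute)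
  qed
qed

lemma continuous_on_Times_slice:
  assumes "continuous_on (T \<times> Z) (\<lambda>(t, z). g t z)" and "K \<subseteq> T" and "z \<in> Z"
  shows "continuous_on K (\<lambda>t. g t z)"
proof -
  have "(\<lambda>t. (t, z)) ` K \<subseteq> T \<times> Z" using assms(2,3) by auto
  from continuous_on_compose2[OF assms(1) continuous_on_Pair[OF continuous_on_id continuous_on_const] this]
  show ?thesis by simp
qed

lemma manifold_with_corners_compact_neighbourhood_near:
  fixes g :: "'a::topological_space \<Rightarrow> 'z::metric_space \<Rightarrow> 'v::metric_space"
  assumes "manifold_with_corners (top_of_set T)" and "continuous_on (T \<times> Z) (\<lambda>(t, z). g t z)"
    and "t0 \<in> T" and "z0 \<in> Z" and "r > 0"
  obtains U K \<rho> where "openin (top_of_set T) U" "t0 \<in> U" "U \<subseteq> K" "K \<subseteq> T" "compact K" "\<rho> > 0"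
    "\<And>t z. t \<in> K \<Longrightarrow> z \<in> Z \<inter> ball z0 \<rho> \<Longrightarrow> dist (g t z) (g t0 z0) < r"
proof -
  obtain A \<rho> where A: "open A" "t0 \<in> A" "\<rho> > 0"
    "\<And>t z. t \<in> T \<inter> A \<Longrightarrow> z \<in> Z \<inter> ball z0 \<rho> \<Longrightarrow> dist (g t z) (g t0 z0) < r"
    using continuous_on_Times_near[OF assms(2-5)] by blast
  obtain U K where "openin (top_of_set T) U" "compact K" "t0 \<in> U" "U \<subseteq> K" "K \<subseteq> T \<inter> A"
    using manifold_with_corners_compact_neighbourhood[OF assms(1) A(1) assms(3) A(2)] by blast
  with A(3,4) show ?thesis
    using that[of U K \<rho>] by blast
qed

lemma Vinf_minimizer:
  fixes Q :: "'a::topological_space \<Rightarrow> 'z \<Rightarrow> real"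
  assumes "compact K" "K \<noteq> {}" and "\<And>z. z \<in> Z \<Longrightarrow> continuous_on K (\<lambda>t. Q t z)"
  obtains m where "\<And>z. z \<in> Z \<Longrightarrow> m z \<in> K"
    "\<And>z t. z \<in> Z \<Longrightarrow> t \<in> K \<Longrightarrow> Q (m z) z \<le> Q t z"
    "\<And>z. z \<in> Z \<Longrightarrow> Vinf Q K z = ereal (Q (m z) z)"
proof -
  have "\<forall>z\<in>Z. \<exists>t\<in>K. \<forall>t'\<in>K. Q t z \<le> Q t' z"
    using continuous_attains_inf[OF assms(1,2)] assms(3) by blast
  then obtain m where m: "\<And>z. z \<in> Z \<Longrightarrow> m z \<in> K \<and> (\<forall>t\<in>K. Q (m z) z \<le> Q t z)"
    by (metis (no_types, lifting) bchoice)
  moreover have "Vinf Q K z = ereal (Q (m z) z)" if "z \<in> Z" for z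
    unfolding Vinf_def
    by (rule antisym) (use m[OF that] in \<open>auto intro!: INF_lower INF_greatest\<close>)
  ultimately show ?thesis using that by blast
qed

lemma (in prob_space) compl_null_sets_if_emeasure_1:
  assumes "A \<in> events" and "emeasure M A = 1"
  shows "space M - A \<in> null_sets M"
proof (rule null_setsI)
  show "emeasure M (space M - A) = 0"
    using emeasure_compl[OF assms(1)] assms(2) emeasure_space_1 by simp
qed (use assms(1) in auto)

lemma null_sets_completion_if_lebesgue_null:
  fixes P :: "'z::euclidean_space measure"
  assumes "prob_space P" and "sets P = sets borel" and "absolutely_continuous lborel P"
    and "Z \<in> sets P" and "emeasure P Z = 1" and "A \<inter> Z \<in> null_sets lebesgue"
  shows "A \<in> null_sets (completion P)"
proof -
  obtain C where C: "C \<in> null_sets lborel" "A \<inter> Z \<subseteq> C"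
    using assms(6) by (auto simp: null_sets_completion_iff2)
  have "space P - Z \<in> null_sets P"
    using prob_space.compl_null_sets_if_emeasure_1[OF assms(1,4,5)] .
  moreover have "C \<in> null_sets P" using C(1) assms(3) by (auto simp: absolutely_continuous_def)
  moreover have "A \<subseteq> (space P - Z) \<union> C"
    using C(2) sets_eq_imp_space_eq[OF assms(2)] by auto
  ultimately show ?thesis
    by (auto simp: null_sets_completion_iff2)
qed

lemma compact_null_sets_if_disjoint_translates:
  fixes C :: "'z::euclidean_space set" and u :: 'z
  assumes "compact C"
    and disjoint: "\<And>\<alpha> \<beta>. \<alpha> \<noteq> \<beta> \<Longrightarrow> (+) (\<alpha> *\<^sub>R u) ` C \<inter> (+) (\<beta> *\<^sub>R u) ` C = {}"
  shows "C \<in> null_sets lborel"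
proof -
  obtain R where R: "\<And>x. x \<in> C \<Longrightarrow> norm x \<le> R"
    using compact_imp_bounded[OF assms(1)] bounded_iff by blast
  define T where "T n i = (+) ((real i / real n) *\<^sub>R u) ` C" for n i :: nat
  define B where "B = measure lebesgue (cball (0::'z) (R + norm u))"
  have T_lmeasurable: "T n i \<in> lmeasurable" for n i
    unfolding T_def by (intro lmeasurable_compact compact_translation assms(1))
  have T_measure: "measure lebesgue (T n i) = measure lebesgue C" for n i
    unfolding T_def by (rule measure_translation)
  have T_bounded: "T n i \<subseteq> cball 0 (R + norm u)" if "i < n" for n i
  proof
    fix z assume "z \<in> T n i"
    then obtain x where x: "x \<in> C" "z = (real i / real n) *\<^sub>R u + x" unfolding T_def by blast
    have "real i / real n \<le> 1" using that by simp
    then have "(real i / real n) * norm u \<le> norm u"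
      by (intro mult_left_le_one_le) auto
    then have "norm ((real i / real n) *\<^sub>R u) \<le> norm u"
      by simp
    then show "z \<in> cball 0 (R + norm u)"
      using R[OF x(1)] norm_triangle_ineq[of "(real i / real n) *\<^sub>R u" x] x(2) by auto
  qed
  have T_disjoint: "disjoint_family_on (T n) {..<n}" for n
  proof (unfold disjoint_family_on_def, intro ballI impI)
    fix i j assume "i \<in> {..<n}" "j \<in> {..<n}" "i \<noteq> j"
    then have "real i / real n \<noteq> real j / real n" by (simp add: divide_cancel_right)
    then show "T n i \<inter> T n j = {}" unfolding T_def by (rule disjoint)
  qed
  have translates_bound: "real n * measure lebesgue C \<le> B" for n
  proof -
    have "measure lebesgue (\<Union>i<n. T n i) = (\<Sum>i<n. measure lebesgue (T n i))"
      by (rule measure_finite_Union) (auto intro!: fmeasurableD fmeasurableD2 T_lmeasurable T_disjoint)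
    then have "real n * measure lebesgue C = measure lebesgue (\<Union>i<n. T n i)"
      by (simp add: T_measure)
    also have "\<dots> \<le> B"
      unfolding B_def using T_bounded T_lmeasurable
      by (intro measure_mono_fmeasurable) (auto intro!: sets.finite_UN fmeasurableD)
    finally show ?thesis .
  qed
  have "measure lebesgue C = 0"
  proof (rule ccontr)
    assume "measure lebesgue C \<noteq> 0"
    then have "measure lebesgue C > 0" using measure_nonneg[of lebesgue C] by linarith
    moreover obtain n :: nat where "B / measure lebesgue C < n" using reals_Archimedean2 by blast
    ultimately show False
      using translates_bound[of n] by (simp add: divide_less_eq)
  qed
  then have "C \<in> null_sets lebesgue"
    using lmeasurable_compact[OF assms(1)]
    by (auto intro!: null_setsI fmeasurableD simp: emeasure_eq_measure2)
  then show ?thesis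
    using borel_compact[OF assms(1)] by (simp add: null_sets_completion_iff)
qed

lemma bounded_cone_null_sets:
  fixes S :: "'z::euclidean_space set" and u :: 'z
  assumes "u \<noteq> 0" and "c < norm u" and "bounded S"
    and cone: "\<And>x y. x \<in> S \<Longrightarrow> y \<in> S \<Longrightarrow> \<bar>u \<bullet> (x - y)\<bar> \<le> c * norm (x - y)"
  shows "S \<in> null_sets lebesgue"
proof -
  define R where "R = {p::'z \<times> 'z. \<bar>u \<bullet> (fst p - snd p)\<bar> \<le> c * norm (fst p - snd p)}"
  have "closed R"
    unfolding R_def by (intro closed_Collect_le continuous_intros)
  moreover have "S \<times> S \<subseteq> R" using cone by (auto simp: R_def)
  ultimately have "closure S \<times> closure S \<subseteq> R"
    by (metis closure_Times closure_minimal)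
  then have cone_closure: "\<bar>u \<bullet> (x - y)\<bar> \<le> c * norm (x - y)"
    if "x \<in> closure S" "y \<in> closure S" for x y
    using that by (auto simp: R_def)
  have "closure S \<in> null_sets lborel"
  proof (rule compact_null_sets_if_disjoint_translates)
    show "compact (closure S)" using assms(3) by (simp add: compact_closure)
    fix \<alpha> \<beta> :: real assume "\<alpha> \<noteq> \<beta>"
    show "(+) (\<alpha> *\<^sub>R u) ` closure S \<inter> (+) (\<beta> *\<^sub>R u) ` closure S = {}"
    proof (rule ccontr)
      assume "(+) (\<alpha> *\<^sub>R u) ` closure S \<inter> (+) (\<beta> *\<^sub>R u) ` closure S \<noteq> {}"
      then obtain x y where xy: "x \<in> closure S" "y \<in> closure S" "\<alpha> *\<^sub>R u + x = \<beta> *\<^sub>R u + y"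
        by blast
      define d where "d = \<beta> - \<alpha>"
      have "x - y = d *\<^sub>R u" using xy(3) by (simp add: d_def algebra_simps)
      then have "\<bar>d\<bar> * norm u * norm u \<le> c * (\<bar>d\<bar> * norm u)"
        using cone_closure[OF xy(1,2)] by (simp add: abs_mult power2_norm_eq_inner[symmetric] power2_eq_square)
      moreover have "c * (\<bar>d\<bar> * norm u) < norm u * (\<bar>d\<bar> * norm u)"
        using assms(1,2) \<open>\<alpha> \<noteq> \<beta>\<close> by (intro mult_strict_right_mono) (auto simp: d_def)
      ultimately show False by (simp add: algebra_simps)
    qed
  qed
  then show ?thesis
    by (rule null_sets_completion_subset[OF closure_subset null_sets_completionI])
qed

lemma locally_cone_null_sets:
  fixes E :: "'z::euclidean_space set" and u :: 'z
  assumes "u \<noteq> 0" and "c < norm u" and \<delta>_pos: "\<And>x. x \<in> E \<Longrightarrow> 0 < \<delta> x"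
    and cone: "\<And>x y. x \<in> E \<Longrightarrow> y \<in> E \<Longrightarrow> dist x y < \<delta> x \<Longrightarrow> dist x y < \<delta> y \<Longrightarrow>
      \<bar>u \<bullet> (x - y)\<bar> \<le> c * dist x y"
  shows "E \<in> null_sets lebesgue"
proof -
  obtain D :: "'z set" where D: "countable D" "\<And>X. open X \<Longrightarrow> X \<noteq> {} \<Longrightarrow> \<exists>d\<in>D. d \<in> X"
    using countable_dense_exists by blast
  define S where "S k d = {x \<in> E. 1 / real (Suc k) < \<delta> x \<and> dist x d < 1 / (4 * real (Suc k))}"
    for k d
  have S_null: "S k d \<in> null_sets lebesgue" for k d
  proof (rule bounded_cone_null_sets[OF assms(1,2)])
    show "bounded (S k d)"
      by (rule bounded_subset[OF bounded_ball[of d "1 / (4 * real (Suc k))"]])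
        (auto simp: S_def dist_commute)
    fix x y assume x: "x \<in> S k d" and y: "y \<in> S k d"
    have "dist x y \<le> dist x d + dist y d" using dist_triangle[of x y d] by (simp add: dist_commute)
    also have "\<dots> < 1 / real (Suc k)"
      using x y by (simp add: S_def field_simps)
    finally show "\<bar>u \<bullet> (x - y)\<bar> \<le> c * norm (x - y)"
      using x y cone by (force simp: S_def dist_norm)
  qed
  have "E \<subseteq> (\<Union>k. \<Union>d\<in>D. S k d)"
  proof
    fix x assume "x \<in> E"
    then obtain k where k: "1 / real (Suc k) < \<delta> x"
      using \<delta>_pos nat_approx_posE by blast
    obtain d where "d \<in> D" "d \<in> ball x (1 / (4 * real (Suc k)))"
      using D(2)[of "ball x (1 / (4 * real (Suc k)))"] by auto
    with \<open>x \<in> E\<close> k show "x \<in> (\<Union>k. \<Union>d\<in>D. S k d)"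
      by (auto simp: S_def)
  qed
  moreover have "(\<Union>k. \<Union>d\<in>D. S k d) \<in> null_sets lebesgue"
    using S_null D(1) by (intro null_sets_UN null_sets_UN') auto
  ultimately show ?thesis
    by (rule null_sets_completion_subset)
qed

text \<open>Here \<open>Fx\<close>, \<open>Fy\<close> are the common minimal values at two tie points \<open>x\<close> and \<open>y = x + v\<close>;
  \<open>p1, p2\<close> (resp. \<open>q1, q2\<close>) are the values at the other point of the minimizers over the
  first (resp. second) set, and \<open>\<alpha>x, \<alpha>y, \<beta>x, \<beta>y\<close> their gradients.\<close>

lemma gradient_gap_at_ties:
  fixes v a b \<alpha>x \<alpha>y \<beta>x \<beta>y :: "'z::real_inner"
  assumes min1: "Fy \<le> p1" and min2: "Fx \<le> p2" and min3: "Fy \<le> q1" and min4: "Fx \<le> q2"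
    and R1: "\<bar>p1 - Fx - \<alpha>x \<bullet> v\<bar> \<le> r * norm v"
    and R2: "\<bar>p2 - Fy - \<alpha>y \<bullet> (- v)\<bar> \<le> r * norm v"
    and R3: "\<bar>q1 - Fx - \<beta>x \<bullet> v\<bar> \<le> r * norm v"
    and R4: "\<bar>q2 - Fy - \<beta>y \<bullet> (- v)\<bar> \<le> r * norm v"
    and D1: "norm (\<alpha>x - a) \<le> r" and D2: "norm (\<alpha>y - a) \<le> r"
    and D3: "norm (\<beta>x - b) \<le> r" and D4: "norm (\<beta>y - b) \<le> r"
  shows "\<bar>(a - b) \<bullet> v\<bar> \<le> 4 * r * norm v"
proof -
  have cs: "\<bar>w \<bullet> v - c \<bullet> v\<bar> \<le> r * norm v" if "norm (w - c) \<le> r" for w c :: 'z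
    using Cauchy_Schwarz_ineq2[of "w - c" v] mult_right_mono[OF that norm_ge_zero[of v]]
    by (simp add: inner_diff_left)
  show ?thesis
    using min1 min2 min3 min4 R1 R2 R3 R4 cs[OF D1] cs[OF D2] cs[OF D3] cs[OF D4]
    by (simp add: inner_diff_left abs_le_iff)
qed

lemma has_derivative_linear_approx:
  assumes "(f has_derivative f') (at z)" and "0 < r"
  obtains d where "0 < d" "\<And>y. norm (y - z) < d \<Longrightarrow> norm (f y - f z - f' (y - z)) \<le> r * norm (y - z)"
  using assms unfolding has_derivative_within_alt by blast

lemma tie_set_null_sets:
  fixes Q :: "'a::topological_space \<Rightarrow> 'z::euclidean_space \<Rightarrow> real" and DQ :: "'a \<Rightarrow> 'z \<Rightarrow> 'z"
  assumes N: "compact N" "N \<noteq> {}" and M: "compact M" "M \<noteq> {}"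
    and Q_cont_N: "\<And>z. z \<in> Z \<Longrightarrow> continuous_on N (\<lambda>t. Q t z)"
    and Q_cont_M: "\<And>z. z \<in> Z \<Longrightarrow> continuous_on M (\<lambda>t. Q t z)"
    and Q_deriv: "\<And>t z. t \<in> N \<union> M \<Longrightarrow> z \<in> Z \<Longrightarrow>
      ((\<lambda>y. Q t y) has_derivative (\<lambda>h. DQ t z \<bullet> h)) (at z)"
    and DQ_N: "\<And>t z. t \<in> N \<Longrightarrow> z \<in> Z \<inter> W \<Longrightarrow> norm (DQ t z - a) \<le> r"
    and DQ_M: "\<And>t z. t \<in> M \<Longrightarrow> z \<in> Z \<inter> W \<Longrightarrow> norm (DQ t z - b) \<le> r"
    and r: "0 < r" "4 * r < norm (a - b)"
  shows "{z \<in> Z \<inter> W. Vinf Q N z = Vinf Q M z} \<in> null_sets lebesgue"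
proof -
  obtain tN where tN: "\<And>z. z \<in> Z \<Longrightarrow> tN z \<in> N" "\<And>z t. z \<in> Z \<Longrightarrow> t \<in> N \<Longrightarrow> Q (tN z) z \<le> Q t z"
      "\<And>z. z \<in> Z \<Longrightarrow> Vinf Q N z = ereal (Q (tN z) z)"
    using Vinf_minimizer[where Z = Z and Q = Q, OF N Q_cont_N] by blast
  obtain tM where tM: "\<And>z. z \<in> Z \<Longrightarrow> tM z \<in> M" "\<And>z t. z \<in> Z \<Longrightarrow> t \<in> M \<Longrightarrow> Q (tM z) z \<le> Q t z"
      "\<And>z. z \<in> Z \<Longrightarrow> Vinf Q M z = ereal (Q (tM z) z)"
    using Vinf_minimizer[where Z = Z and Q = Q, OF M Q_cont_M] by blast
  define lin where "lin z y \<longleftrightarrow> (\<forall>t\<in>{tN z, tM z}.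
      norm (Q t y - Q t z - DQ t z \<bullet> (y - z)) \<le> r * norm (y - z))" for z y
  have "\<forall>z\<in>Z. \<exists>d>0. \<forall>y. norm (y - z) < d \<longrightarrow> lin z y"
  proof
    fix z assume z: "z \<in> Z"
    have "tN z \<in> N \<union> M" "tM z \<in> N \<union> M" using tN(1) tM(1) z by auto
    from this[THEN Q_deriv, OF z] obtain d1 d2 where d: "0 < d1" "0 < d2"
      "\<And>y. norm (y - z) < d1 \<Longrightarrow>
        norm (Q (tN z) y - Q (tN z) z - DQ (tN z) z \<bullet> (y - z)) \<le> r * norm (y - z)"
      "\<And>y. norm (y - z) < d2 \<Longrightarrow>
        norm (Q (tM z) y - Q (tM z) z - DQ (tM z) z \<bullet> (y - z)) \<le> r * norm (y - z)"
      using has_derivative_linear_approx[OF _ r(1)] by metis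
    show "\<exists>d>0. \<forall>y. norm (y - z) < d \<longrightarrow> lin z y"
      using d by (intro exI[of _ "min d1 d2"]) (auto simp: lin_def)
  qed
  then obtain \<delta> where \<delta>: "\<forall>z\<in>Z. 0 < \<delta> z \<and> (\<forall>y. norm (y - z) < \<delta> z \<longrightarrow> lin z y)"
    by (rule bchoice[THEN exE])
  show ?thesis
  proof (rule locally_cone_null_sets[where u = "a - b" and c = "4 * r" and \<delta> = \<delta>])
    show "a - b \<noteq> 0" "4 * r < norm (a - b)" using r by auto
    fix x y assume x: "x \<in> {z \<in> Z \<inter> W. Vinf Q N z = Vinf Q M z}"
      and y: "y \<in> {z \<in> Z \<inter> W. Vinf Q N z = Vinf Q M z}"
      and "dist x y < \<delta> x" "dist x y < \<delta> y"
    then have lin: "lin x y" "lin y x"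
      using \<delta> by (auto simp: dist_norm norm_minus_commute)
    have tie: "Q (tN x) x = Q (tM x) x" "Q (tN y) y = Q (tM y) y"
      using x y tN(3) tM(3) by auto
    define v where "v = y - x"
    have "Q (tN y) y \<le> Q (tN x) y" "Q (tN x) x \<le> Q (tN y) x"
      using x y tN(1,2) by auto
    moreover have "Q (tN y) y \<le> Q (tM x) y" "Q (tN x) x \<le> Q (tM y) x"
      using x y tM(1,2) tie by auto
    moreover have "\<bar>Q (tN x) y - Q (tN x) x - DQ (tN x) x \<bullet> v\<bar> \<le> r * norm v"
        "\<bar>Q (tN y) x - Q (tN y) y - DQ (tN y) y \<bullet> (- v)\<bar> \<le> r * norm v"
        "\<bar>Q (tM x) y - Q (tN x) x - DQ (tM x) x \<bullet> v\<bar> \<le> r * norm v"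
        "\<bar>Q (tM y) x - Q (tN y) y - DQ (tM y) y \<bullet> (- v)\<bar> \<le> r * norm v"
      using lin tie by (auto simp: lin_def v_def norm_minus_commute)
    moreover have "norm (DQ (tN x) x - a) \<le> r" "norm (DQ (tN y) y - a) \<le> r"
        "norm (DQ (tM x) x - b) \<le> r" "norm (DQ (tM y) y - b) \<le> r"
      using x y tN(1) tM(1) DQ_N DQ_M by auto
    ultimately have "\<bar>(a - b) \<bullet> v\<bar> \<le> 4 * r * norm v"
      by (rule gradient_gap_at_ties)
    then show "\<bar>(a - b) \<bullet> (x - y)\<bar> \<le> 4 * r * dist x y"
      by (simp add: v_def dist_norm norm_minus_commute inner_diff_right)
  qed (use \<delta> in auto)
qed

theorem lemma6:
  fixes P :: "'z::euclidean_space measure"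
    and Z :: "'z set"
    and J :: "'j set"
    and Tj :: "'j \<Rightarrow> 'a::topological_space set"
    and Q :: "'a \<Rightarrow> 'z \<Rightarrow> real"
    and DQ :: "'a \<Rightarrow> 'z \<Rightarrow> 'z"
  assumes P_prob: "prob_space P"
    and P_sets: "sets P = sets borel"
    and P_ac: "absolutely_continuous lborel P"
    and Z_meas: "Z \<in> sets P"
    and Z_full: "emeasure P Z = 1"
    and J_countable: "countable J"
    and Tj_disj: "disjoint_family_on Tj J"
    and Tj_manifold: "\<And>j. j \<in> J \<Longrightarrow> manifold_with_corners (top_of_set (Tj j))"
    and Q_cont: "\<And>j. j \<in> J \<Longrightarrow> continuous_on (Tj j \<times> Z) (\<lambda>(t, z). Q t z)"
    and Q_deriv: "\<And>j t z. j \<in> J \<Longrightarrow> t \<in> Tj j \<Longrightarrow> z \<in> Z \<Longrightarrow>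
                   ((\<lambda>y. Q t y) has_derivative (\<lambda>h. DQ t z \<bullet> h)) (at z)"
    and DQ_cont: "\<And>j. j \<in> J \<Longrightarrow> continuous_on (Tj j \<times> Z) (\<lambda>(t, z). DQ t z)"
    and j1: "j1 \<in> J" and j2: "j2 \<in> J"
    and t: "t \<in> Tj j1" and s: "s \<in> Tj j2"
    and zbar: "zbar \<in> Z"
    and neq: "DQ t zbar \<noteq> DQ s zbar"
  shows "\<exists>N M W.
           (\<exists>U. openin (top_of_set (Tj j1)) U \<and> t \<in> U \<and> U \<subseteq> N) \<and> N \<subseteq> Tj j1 \<and>
           (\<exists>U. openin (top_of_set (Tj j2)) U \<and> s \<in> U \<and> U \<subseteq> M) \<and> M \<subseteq> Tj j2 \<and>
           zbar \<in> interior W \<and>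
           {z \<in> W. Vinf Q N z = Vinf Q M z} \<in> null_sets (completion P)"
proof -
  define r where "r = norm (DQ t zbar - DQ s zbar) / 8"
  have r: "0 < r" "4 * r < norm (DQ t zbar - DQ s zbar)" using neq by (auto simp: r_def)
  obtain U1 N \<rho>1 where N: "openin (top_of_set (Tj j1)) U1" "t \<in> U1" "U1 \<subseteq> N" "N \<subseteq> Tj j1"
      "compact N" "\<rho>1 > 0" "\<And>t' z. t' \<in> N \<Longrightarrow> z \<in> Z \<inter> ball zbar \<rho>1 \<Longrightarrow> dist (DQ t' z) (DQ t zbar) < r"
    using manifold_with_corners_compact_neighbourhood_near[OF Tj_manifold[OF j1] DQ_cont[OF j1] t zbar r(1)]
    by blast
  obtain U2 M \<rho>2 where M: "openin (top_of_set (Tj j2)) U2" "s \<in> U2" "U2 \<subseteq> M" "M \<subseteq> Tj j2"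
      "compact M" "\<rho>2 > 0" "\<And>s' z. s' \<in> M \<Longrightarrow> z \<in> Z \<inter> ball zbar \<rho>2 \<Longrightarrow> dist (DQ s' z) (DQ s zbar) < r"
    using manifold_with_corners_compact_neighbourhood_near[OF Tj_manifold[OF j2] DQ_cont[OF j2] s zbar r(1)]
    by blast
  define W where "W = ball zbar (min \<rho>1 \<rho>2)"
  have "{z \<in> Z \<inter> W. Vinf Q N z = Vinf Q M z} \<in> null_sets lebesgue"
  proof (rule tie_set_null_sets[where a = "DQ t zbar" and b = "DQ s zbar" and r = r])
    fix t' z assume "t' \<in> N" "z \<in> Z \<inter> W"
    then show "norm (DQ t' z - DQ t zbar) \<le> r"
      using N(7)[of t' z] by (auto simp: W_def dist_norm)
  next
    fix s' z assume "s' \<in> M" "z \<in> Z \<inter> W"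
    then show "norm (DQ s' z - DQ s zbar) \<le> r"
      using M(7)[of s' z] by (auto simp: W_def dist_norm)
  qed (use N(2-5) M(2-5) r in \<open>auto intro: continuous_on_Times_slice[OF Q_cont[OF j1]]
         continuous_on_Times_slice[OF Q_cont[OF j2]] Q_deriv[OF j1] Q_deriv[OF j2]\<close>)
  then have "{z \<in> W. Vinf Q N z = Vinf Q M z} \<in> null_sets (completion P)"
    by (intro null_sets_completion_if_lebesgue_null[OF P_prob P_sets P_ac Z_meas Z_full])
      (simp add: Collect_conj_eq Int_ac)
  moreover have "zbar \<in> interior W" using N(6) M(6) by (simp add: W_def)
  ultimately show ?thesis using N M by blast
qed

end
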